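(* If $\varphi$ is an automorphism of $E$ of type 4, then the eigenspace of its linearization $\varphi_\ell$ in $L$ corresponding to the eigenvalue $-1$ is nonzero.
   Context: $F$ is a field of characteristic zero, $L$ an infinite-dimensional $F$-vector space with basis $e_1,e_2,\ldots$, $E$ the Grassmann algebra of $L$. An automorphism $\varphi$ of $E$ with $\varphi^2=\mathrm{id}$ is of type 4 if for every basis $\gamma$ of $L$ no element $v\in\gamma$ satisfies $\varphi(v)=\pm v$. Linearization: write $\varphi(e_i)=u_i+v_i$ with $u_i\in L$ and $v_i$ a linear combination of monomials of length $\ge2$; $\varphi_\ell$ is the endomorphism of $E$ with $\varphi_\ell(e_i)=u_i$ for all $i$ (it is an automorphism of order dividing 2, so $\varphi_\ell$ restricted to $L$ has eigenvalues among $\pm1$). *)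

theory Defs
  imports Complex_Main "HOL-Library.Function_Algebras"
begin

text \<open>An element of E is a function from finite index sets S (standing for the monomial
  e_S = e_{i1} ... e_{ik}, i1 < ... < ik) to its coefficient in F, with finite support.\<close>

type_synonym 'a grass = "nat set \<Rightarrow> 'a"

definition grassE :: "('a::field) grass set" where
  "grassE = {x. finite {S. x S \<noteq> 0} \<and> (\<forall>S. x S \<noteq> 0 \<longrightarrow> finite S)}"

text \<open>Scalar multiplication; addition is the pointwise one on functions.\<close>
definition gscale :: "'a::field \<Rightarrow> 'a grass \<Rightarrow> 'a grass" where
  "gscale c x = (\<lambda>S. c * x S)"

text \<open>Sign of e_S e_T = sign * e_{S \<union> T} for disjoint S, T.\<close>
definition gsign :: "nat set \<Rightarrow> nat set \<Rightarrow> 'a::field" where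
  "gsign S T = (-1) ^ card {(s, t). s \<in> S \<and> t \<in> T \<and> t < s}"

definition gmult :: "'a::field grass \<Rightarrow> 'a grass \<Rightarrow> 'a grass" where
  "gmult x y = (\<lambda>U. \<Sum>S\<in>Pow U. gsign S (U - S) * x S * y (U - S))"

definition gen :: "nat \<Rightarrow> 'a::field grass" where
  "gen i = (\<lambda>S. if S = {i} then 1 else 0)"

definition grassL :: "'a::field grass set" where
  "grassL = {x \<in> grassE. \<forall>S. x S \<noteq> 0 \<longrightarrow> card S = 1}"

definition is_grass_aut :: "('a::field grass \<Rightarrow> 'a grass) \<Rightarrow> bool" where
  "is_grass_aut \<phi> \<longleftrightarrow> bij_betw \<phi> grassE grassE
     \<and> (\<forall>x\<in>grassE. \<forall>y\<in>grassE. \<phi> (x + y) = \<phi> x + \<phi> y)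
     \<and> (\<forall>c. \<forall>x\<in>grassE. \<phi> (gscale c x) = gscale c (\<phi> x))
     \<and> (\<forall>x\<in>grassE. \<forall>y\<in>grassE. \<phi> (gmult x y) = gmult (\<phi> x) (\<phi> y))"

definition is_basis_L :: "'a::field grass set \<Rightarrow> bool" where
  "is_basis_L \<gamma> \<longleftrightarrow> \<gamma> \<subseteq> grassL \<and> module.independent gscale \<gamma>
     \<and> module.span gscale \<gamma> = grassL"

definition type4 :: "('a::field grass \<Rightarrow> 'a grass) \<Rightarrow> bool" where
  "type4 \<phi> \<longleftrightarrow> (\<forall>\<gamma>. is_basis_L \<gamma> \<longrightarrow> \<not> (\<exists>v\<in>\<gamma>. \<phi> v = v \<or> \<phi> v = - v))"

text \<open>Linearization phi_l restricted to L: the linear map with e_i \<mapsto> u_i, where u_i is the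
  degree-one component of phi(e_i).\<close>
definition lin_part :: "('a::field grass \<Rightarrow> 'a grass) \<Rightarrow> 'a grass \<Rightarrow> 'a grass" where
  "lin_part \<phi> x = (\<lambda>S. if card S = 1
       then (\<Sum>i\<in>{i. x {i} \<noteq> 0}. x {i} * \<phi> (gen i) S) else 0)"

end

theory Submission
  imports Defs
begin

text \<open>Let \<open>E(k)\<close> be the ideal of \<open>E\<close> spanned by the monomials of length at least \<open>k\<close>.
  As \<open>\<phi>(e\<^sub>i)\<^sup>2 = 0\<close>, no \<open>\<phi>(e\<^sub>i)\<close> has a constant term, so \<open>\<phi>\<close> preserves every \<open>E(k)\<close>
  with \<open>k \<ge> 1\<close>, and \<open>\<phi>\<^sub>\<ell>\<close> is the map induced by \<open>\<phi>\<close> on \<open>L = E(1)/E(2)\<close>; in particular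
  \<open>\<phi>\<^sub>\<ell>\<close> is an involution. If \<open>-1\<close> were not an eigenvalue of \<open>\<phi>\<^sub>\<ell>\<close>, then \<open>\<phi>\<^sub>\<ell> = id\<close>,
  because \<open>x - \<phi>\<^sub>\<ell> x\<close> is always a \<open>(-1)\<close>-eigenvector or zero. Hence
  \<open>\<phi>(e\<^sub>i) - e\<^sub>i \<in> E(2)\<close>, and by multiplicativity \<open>\<phi>(v) - v \<in> E(k+1)\<close> for all \<open>v \<in> E(k)\<close>.
  The element \<open>h = \<phi>(e\<^sub>i) - e\<^sub>i\<close> satisfies \<open>\<phi>(h) = -h\<close>, so \<open>h \<in> E(k)\<close> gives
  \<open>-2h \<in> E(k+1)\<close>; in characteristic zero \<open>h\<close> lies in every \<open>E(k)\<close>, i.e. \<open>h = 0\<close>.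
  Thus \<open>\<phi>\<close> fixes \<open>e\<^sub>0\<close>, which belongs to a basis of \<open>L\<close>, contradicting type 4.\<close>

lemma sum_fun_apply: "sum f A x = (\<Sum>a\<in>A. f a x)"
  by (induction A rule: infinite_finite_induct) auto

definition gmonom :: "nat set \<Rightarrow> 'a::field grass" where
  "gmonom S = (\<lambda>T. if T = S then 1 else 0)"

lemma gen_eq_gmonom: "gen i = gmonom {i}"
  unfolding gen_def gmonom_def by simp

lemma vector_space_gscale: "vector_space (gscale :: 'a::field \<Rightarrow> 'a grass \<Rightarrow> 'a grass)"
  by unfold_locales (auto simp: gscale_def algebra_simps)

lemma gscale_one [simp]: "gscale 1 x = x"
  by (simp add: gscale_def)

lemma gscale_zero [simp]: "gscale 0 x = 0" "gscale c 0 = 0"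
  by (auto simp: gscale_def)

lemma gscale_diff: "gscale c (x - y) = gscale c x - gscale c y"
  by (auto simp: gscale_def algebra_simps)

lemma gscale_minus_one: "gscale (-1) x = - x"
  by (auto simp: gscale_def)

lemma grassE_add: "x \<in> grassE \<Longrightarrow> y \<in> grassE \<Longrightarrow> x + y \<in> grassE"
proof -
  assume "x \<in> grassE" "y \<in> grassE"
  moreover have "{S. (x + y) S \<noteq> 0} \<subseteq> {S. x S \<noteq> 0} \<union> {S. y S \<noteq> 0}"
    by auto
  ultimately show ?thesis
    unfolding grassE_def by (auto intro: finite_subset)
qed

lemma grassE_scale: "x \<in> grassE \<Longrightarrow> gscale c x \<in> grassE"
  unfolding grassE_def gscale_def by (auto elim!: rev_finite_subset)

lemma grassE_zero: "0 \<in> grassE"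
  unfolding grassE_def by simp

lemma grassE_uminus: "x \<in> grassE \<Longrightarrow> - x \<in> grassE"
  unfolding grassE_def by simp

lemma grassE_diff: "x \<in> grassE \<Longrightarrow> y \<in> grassE \<Longrightarrow> x - y \<in> grassE"
  using grassE_add[of x "- y"] grassE_uminus[of y] by simp

lemma grassE_sum: "(\<And>i. i \<in> I \<Longrightarrow> f i \<in> grassE) \<Longrightarrow> sum f I \<in> grassE"
  by (induction I rule: infinite_finite_induct) (auto intro: grassE_add grassE_zero)

lemma gmonom_in_grassE: "finite S \<Longrightarrow> gmonom S \<in> grassE"
  unfolding grassE_def gmonom_def by (auto elim: rev_finite_subset[of "{S}"])

lemma gen_in_grassE: "gen i \<in> grassE"
  by (simp add: gen_eq_gmonom gmonom_in_grassE)

lemma grass_expansion: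
  assumes "v \<in> grassE"
  shows "v = (\<Sum>S\<in>{S. v S \<noteq> 0}. gscale (v S) (gmonom S))"
proof
  fix T
  have "finite {S. v S \<noteq> 0}"
    using assms by (simp add: grassE_def)
  then show "v T = (\<Sum>S\<in>{S. v S \<noteq> 0}. gscale (v S) (gmonom S)) T"
    by (simp add: sum_fun_apply gscale_def gmonom_def if_distrib sum.delta' cong: if_cong)
qed

lemma gsign_nonzero: "gsign S T \<noteq> (0::'a::field)"
  unfolding gsign_def by simp

lemma gmult_diff_left: "gmult (x - y) z = gmult x z - gmult y z"
  unfolding gmult_def by (auto simp: algebra_simps sum_subtractf)

lemma gmult_diff_right: "gmult z (x - y) = gmult z x - gmult z y"
  unfolding gmult_def by (auto simp: algebra_simps sum_subtractf)

lemma gmult_scale_left: "gmult (gscale c x) z = gscale c (gmult x z)"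
  unfolding gmult_def gscale_def by (auto simp: algebra_simps sum_distrib_left)

lemma gmult_scale_right: "gmult z (gscale c x) = gscale c (gmult z x)"
  unfolding gmult_def gscale_def by (auto simp: algebra_simps sum_distrib_left)

lemma gmult_gen_gmonom:
  assumes "s \<notin> S" "finite S"
  shows "gmult (gen s) (gmonom S) = gscale (gsign {s} S) (gmonom (insert s S) :: 'a::field grass)"
proof (rule ext)
  fix U
  have "gmult (gen s) (gmonom S) U
      = (\<Sum>T\<in>Pow U. if T = {s} then gsign {s} (U - {s}) * gmonom S (U - {s}) else (0::'a))"
    unfolding gmult_def by (rule sum.cong) (auto simp: gen_def)
  also have "\<dots> = gscale (gsign {s} S) (gmonom (insert s S)) U"
  proof (cases "finite U")
    case True
    then show ?thesis
      using assms by (auto simp: sum.delta gscale_def gmonom_def insert_Diff_if)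
  next
    case False
    then show ?thesis
      using assms by (auto simp: gscale_def gmonom_def)
  qed
  finally show "gmult (gen s) (gmonom S) U = gscale (gsign {s} S) (gmonom (insert s S) :: 'a grass) U" .
qed

lemma gmult_gen_self: "gmult (gen s) (gen s) = (0 :: 'a::field grass)"
  unfolding gmult_def gen_def by (rule ext) (auto intro!: sum.neutral)

lemma gmult_self_empty: "gmult x x {} = x {} * (x {} :: 'a::field)"
  by (simp add: gmult_def gsign_def)

section \<open>The filtration by monomial length\<close>

definition grass_filt :: "nat \<Rightarrow> 'a::field grass set" where
  "grass_filt k = {x. \<forall>S. x S \<noteq> 0 \<longrightarrow> k \<le> card S}"

lemma grass_filt_add: "x \<in> grass_filt k \<Longrightarrow> y \<in> grass_filt k \<Longrightarrow> x + y \<in> grass_filt k"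
  unfolding grass_filt_def by (simp add: not_le) (metis add_0)

lemma grass_filt_zero: "0 \<in> grass_filt k"
  unfolding grass_filt_def by simp

lemma grass_filt_scale: "x \<in> grass_filt k \<Longrightarrow> gscale c x \<in> grass_filt k"
  unfolding grass_filt_def gscale_def by simp

lemma grass_filt_diff: "x \<in> grass_filt k \<Longrightarrow> y \<in> grass_filt k \<Longrightarrow> x - y \<in> grass_filt k"
  using grass_filt_add[of x k "gscale (-1) y"] grass_filt_scale[of y k "-1"]
  by (simp add: gscale_minus_one)

lemma grass_filt_scale_iff: "c \<noteq> 0 \<Longrightarrow> gscale c x \<in> grass_filt k \<longleftrightarrow> x \<in> grass_filt k"
  unfolding grass_filt_def gscale_def by simp

lemma grass_filt_sum: "(\<And>i. i \<in> I \<Longrightarrow> f i \<in> grass_filt k) \<Longrightarrow> sum f I \<in> grass_filt k"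
  by (induction I rule: infinite_finite_induct) (auto intro: grass_filt_add grass_filt_zero)

lemma grass_filt_antimono: "j \<le> k \<Longrightarrow> grass_filt k \<subseteq> grass_filt j"
  unfolding grass_filt_def by force

lemma gmonom_in_grass_filt: "gmonom S \<in> grass_filt (card S)"
  unfolding grass_filt_def gmonom_def by auto

lemma grass_filt_gmult:
  assumes "x \<in> grass_filt a" "y \<in> grass_filt b"
  shows "gmult x y \<in> grass_filt (a + b)"
  unfolding grass_filt_def
proof (intro CollectI allI impI)
  fix U
  assume "gmult x y U \<noteq> 0"
  then have ne: "(\<Sum>S\<in>Pow U. gsign S (U - S) * x S * y (U - S)) \<noteq> 0"
    by (simp add: gmult_def)
  then have "finite U"
    by (metis finite_Pow_iff sum.infinite)
  from ne obtain S where S: "S \<in> Pow U" "gsign S (U - S) * x S * y (U - S) \<noteq> 0"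
    by (meson sum.neutral)
  with assms have "a \<le> card S" "b \<le> card (U - S)"
    unfolding grass_filt_def by auto
  moreover have "card (U - S) = card U - card S" "card S \<le> card U"
    using S(1) \<open>finite U\<close> by (auto simp: card_Diff_subset finite_subset card_mono)
  ultimately show "a + b \<le> card U"
    by linarith
qed

lemma grass_filt_gmult_congr:
  assumes "x - x' \<in> grass_filt (a + d)" "y - y' \<in> grass_filt (b + d)"
    and "x' \<in> grass_filt a" "y' \<in> grass_filt b"
  shows "gmult x y - gmult x' y' \<in> grass_filt (a + b + d)"
proof -
  have "y - y' \<in> grass_filt b"
    using assms(2) grass_filt_antimono[of b "b + d"] by auto
  then have "(y - y') + y' \<in> grass_filt b"
    using assms(4) by (rule grass_filt_add)
  have sums: "a + b + d = a + d + b" "a + b + d = a + (b + d)"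
    by simp_all
  have "gmult (x - x') ((y - y') + y') \<in> grass_filt (a + b + d)"
    unfolding sums(1) by (rule grass_filt_gmult[OF assms(1) \<open>(y - y') + y' \<in> _\<close>])
  moreover have "gmult x' (y - y') \<in> grass_filt (a + b + d)"
    unfolding sums(2) by (rule grass_filt_gmult[OF assms(3,2)])
  moreover have "gmult x y - gmult x' y' = gmult (x - x') ((y - y') + y') + gmult x' (y - y')"
    by (simp add: gmult_diff_left gmult_diff_right)
  ultimately show ?thesis
    by (metis grass_filt_add)
qed

lemma grass_filt_Inter:
  assumes "\<And>k. x \<in> grass_filt k"
  shows "x = 0"
proof
  fix S
  show "x S = 0 S"
    using assms[of "Suc (card S)"] by (auto simp: grass_filt_def)
qed

definition grade_scale :: "'a::field \<Rightarrow> 'a grass \<Rightarrow> 'a grass" where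
  "grade_scale t x = (\<lambda>S. t ^ card S * x S)"

lemma grade_scale_zero: "v \<in> grass_filt 1 \<Longrightarrow> grade_scale 0 v = 0"
  unfolding grade_scale_def grass_filt_def by (force simp: zero_power)

lemma grade_scale_one [simp]: "grade_scale 1 v = v"
  by (simp add: grade_scale_def)

definition deg1_part :: "'a::field grass \<Rightarrow> 'a grass" where
  "deg1_part x = (\<lambda>S. if card S = 1 then x S else 0)"

lemma deg1_part_add: "deg1_part (x + y) = deg1_part x + deg1_part y"
  unfolding deg1_part_def by auto

lemma deg1_part_diff: "deg1_part (x - y) = deg1_part x - deg1_part y"
  unfolding deg1_part_def by auto

lemma deg1_part_filt2: "x \<in> grass_filt 2 \<Longrightarrow> deg1_part x = 0"
  unfolding deg1_part_def grass_filt_def by fastforce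

lemma diff_deg1_part_in_filt2: "x \<in> grass_filt 1 \<Longrightarrow> x - deg1_part x \<in> grass_filt 2"
  unfolding deg1_part_def grass_filt_def by auto

lemma grassL_grassE: "x \<in> grassL \<Longrightarrow> x \<in> grassE"
  unfolding grassL_def by auto

lemma grassL_filt1: "x \<in> grassL \<Longrightarrow> x \<in> grass_filt 1"
  unfolding grassL_def grass_filt_def by auto

lemma deg1_part_grassL: "x \<in> grassL \<Longrightarrow> deg1_part x = x"
  unfolding deg1_part_def grassL_def by (auto intro!: ext)

lemma deg1_part_in_grassL: "y \<in> grassE \<Longrightarrow> deg1_part y \<in> grassL"
  unfolding grassL_def grassE_def deg1_part_def by (auto elim!: rev_finite_subset)

lemma grassL_add:
  assumes "x \<in> grassL" "y \<in> grassL"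
  shows "x + y \<in> grassL"
proof -
  have "(x + y) S \<noteq> 0 \<Longrightarrow> x S \<noteq> 0 \<or> y S \<noteq> 0" for S
    by auto
  with assms show ?thesis
    unfolding grassL_def using grassE_add by blast
qed

lemma grassL_scale: "x \<in> grassL \<Longrightarrow> gscale c x \<in> grassL"
  unfolding grassL_def using grassE_scale[of x c] by (auto simp: gscale_def)

lemma grassL_diff: "x \<in> grassL \<Longrightarrow> y \<in> grassL \<Longrightarrow> x - y \<in> grassL"
  using grassL_add[of x "gscale (-1) y"] grassL_scale[of y "-1"] by (simp add: gscale_minus_one)

lemma grassL_zero: "0 \<in> grassL"
  unfolding grassL_def using grassE_zero by simp

lemma gen_in_grassL: "gen i \<in> grassL"
  using gen_in_grassE[of i] unfolding grassL_def by (simp add: gen_def)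

lemma gen_nonzero: "gen i \<noteq> (0 :: 'a::field grass)"
  by (metis gen_def zero_fun_def zero_neq_one)

lemma grassL_expansion:
  assumes "z \<in> grassL"
  shows "finite {i. z {i} \<noteq> 0}" "z = (\<Sum>i\<in>{i. z {i} \<noteq> 0}. gscale (z {i}) (gen i))"
proof -
  have "{i. z {i} \<noteq> 0} = (\<lambda>i. {i}) -` {S. z S \<noteq> 0}"
    by auto
  moreover have "finite {S. z S \<noteq> 0}"
    using assms by (simp add: grassL_def grassE_def)
  ultimately show fin: "finite {i. z {i} \<noteq> 0}"
    by (metis finite_vimageI inj_singleton)
  show "z = (\<Sum>i\<in>{i. z {i} \<noteq> 0}. gscale (z {i}) (gen i))"
  proof
    fix S
    show "z S = (\<Sum>i\<in>{i. z {i} \<noteq> 0}. gscale (z {i}) (gen i)) S"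
    proof (cases "card S = 1")
      case True
      then obtain j where "S = {j}"
        by (auto simp: card_1_singleton_iff)
      with fin show ?thesis
        by (simp add: sum_fun_apply gscale_def gen_def if_distrib sum.delta' cong: if_cong)
    next
      case False
      then have "(\<Sum>i\<in>{i. z {i} \<noteq> 0}. gscale (z {i}) (gen i)) S = 0"
        unfolding sum_fun_apply by (intro sum.neutral) (auto simp: gscale_def gen_def)
      with False assms show ?thesis
        by (auto simp: grassL_def)
    qed
  qed
qed

lemma grassL_nonzero_in_basis:
  assumes "x \<in> grassL" "x \<noteq> 0"
  shows "\<exists>\<gamma>. is_basis_L \<gamma> \<and> x \<in> \<gamma>"
proof -
  interpret V: vector_space "gscale :: 'a \<Rightarrow> 'a grass \<Rightarrow> 'a grass"
    by (rule vector_space_gscale)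
  have "V.independent {x}"
    using assms(2) by (simp add: V.independent_insert V.span_empty)
  then obtain B where B: "{x} \<subseteq> B" "B \<subseteq> grassL" "V.independent B" "grassL \<subseteq> V.span B"
    using V.maximal_independent_subset_extend assms(1) by (metis empty_subsetI insert_subset)
  have "V.subspace grassL"
    unfolding V.subspace_def using grassL_zero grassL_add grassL_scale by blast
  then have "V.span B \<subseteq> grassL"
    by (rule V.span_minimal[OF B(2)])
  with B show ?thesis
    unfolding is_basis_L_def by blast
qed

lemma type4_no_fixed_vector:
  assumes "type4 \<phi>" "x \<in> grassL" "x \<noteq> 0"
  shows "\<phi> x \<noteq> x"
  using assms grassL_nonzero_in_basis unfolding type4_def by blast

section \<open>Automorphisms and the filtration\<close>

locale grass_aut =
  fixes \<phi> :: "'a::field grass \<Rightarrow> 'a grass"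
  assumes aut: "is_grass_aut \<phi>"
begin

lemma phi_in_grassE: "x \<in> grassE \<Longrightarrow> \<phi> x \<in> grassE"
  using aut unfolding is_grass_aut_def bij_betw_def by auto

lemma phi_add: "x \<in> grassE \<Longrightarrow> y \<in> grassE \<Longrightarrow> \<phi> (x + y) = \<phi> x + \<phi> y"
  using aut unfolding is_grass_aut_def by auto

lemma phi_scale: "x \<in> grassE \<Longrightarrow> \<phi> (gscale c x) = gscale c (\<phi> x)"
  using aut unfolding is_grass_aut_def by auto

lemma phi_mult: "x \<in> grassE \<Longrightarrow> y \<in> grassE \<Longrightarrow> \<phi> (gmult x y) = gmult (\<phi> x) (\<phi> y)"
  using aut unfolding is_grass_aut_def by auto

lemma phi_zero: "\<phi> 0 = 0"
  by (metis gscale_zero(1) phi_scale grassE_zero)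

lemma phi_diff:
  assumes "x \<in> grassE" "y \<in> grassE"
  shows "\<phi> (x - y) = \<phi> x - \<phi> y"
proof -
  have "\<phi> (x - y) = \<phi> (x + gscale (-1) y)"
    by (simp add: gscale_minus_one)
  also have "\<dots> = \<phi> x + gscale (-1) (\<phi> y)"
    using assms by (simp only: phi_add phi_scale grassE_scale)
  finally show ?thesis
    by (simp add: gscale_minus_one)
qed

lemma phi_lincomb:
  "finite I \<Longrightarrow> (\<And>i. i \<in> I \<Longrightarrow> f i \<in> grassE) \<Longrightarrow>
    \<phi> (\<Sum>i\<in>I. gscale (c i) (f i)) = (\<Sum>i\<in>I. gscale (c i) (\<phi> (f i)))"
proof (induction I rule: finite_induct)
  case empty
  show ?case
    by (simp only: sum.empty phi_zero)
next
  case (insert a I)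
  have "f a \<in> grassE" "(\<Sum>i\<in>I. gscale (c i) (f i)) \<in> grassE"
    using insert.prems by (auto intro: grassE_sum grassE_scale)
  then have "\<phi> (gscale (c a) (f a) + (\<Sum>i\<in>I. gscale (c i) (f i)))
      = gscale (c a) (\<phi> (f a)) + (\<Sum>i\<in>I. gscale (c i) (\<phi> (f i)))"
    using insert.IH insert.prems by (simp add: phi_add phi_scale grassE_scale)
  then show ?case
    unfolding sum.insert[OF insert.hyps] .
qed

lemma phi_gen_no_constant: "\<phi> (gen j) {} = 0"
proof -
  have "\<phi> (gen j) {} * \<phi> (gen j) {} = gmult (\<phi> (gen j)) (\<phi> (gen j)) {}"
    by (simp add: gmult_self_empty)
  also have "\<dots> = \<phi> (gmult (gen j) (gen j)) {}"
    by (simp add: phi_mult gen_in_grassE)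
  also have "\<dots> = 0"
    by (simp add: gmult_gen_self phi_zero)
  finally show ?thesis
    by simp
qed

lemma phi_gen_in_filt1: "\<phi> (gen j) \<in> grass_filt 1"
  using phi_in_grassE[OF gen_in_grassE, of j] phi_gen_no_constant[of j]
  unfolding grass_filt_def grassE_def by (auto simp: Suc_le_eq card_gt_0_iff)

text \<open>For \<open>t = 0\<close> this shows that \<open>\<phi>\<close> preserves the filtration; for \<open>t = 1\<close> that \<open>\<phi>\<close>
  acts trivially on each \<open>E(k)/E(k+1)\<close> as soon as it does so on \<open>E(1)/E(2)\<close>.\<close>

lemma phi_gmonom_congr:
  assumes gen: "\<And>j. \<phi> (gen j) - gscale t (gen j) \<in> grass_filt (1 + d)"
    and "finite S" "S \<noteq> {}"
  shows "\<phi> (gmonom S) - gscale (t ^ card S) (gmonom S) \<in> grass_filt (card S + d)"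
  using assms(2,3)
proof (induction S rule: finite_ne_induct)
  case (singleton s)
  have "card {s} + d = 1 + d" "t ^ card {s} = t"
    by simp_all
  then show ?case
    using gen[of s] unfolding gen_eq_gmonom by (simp only:)
next
  case (insert s S)
  define \<sigma> :: 'a where "\<sigma> = gsign {s} S"
  define m :: "'a grass" where "m = gmonom (insert s S)"
  have prod: "gmult (gen s) (gmonom S) = gscale \<sigma> m"
    unfolding \<sigma>_def m_def using insert by (simp add: gmult_gen_gmonom)
  have "gscale \<sigma> (\<phi> m) = \<phi> (gmult (gen s) (gmonom S))"
    using insert by (simp add: prod m_def phi_scale gmonom_in_grassE)
  also have "\<dots> = gmult (\<phi> (gen s)) (\<phi> (gmonom S))"
    using insert by (simp add: phi_mult gen_in_grassE gmonom_in_grassE)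
  moreover have "gscale \<sigma> (gscale (t ^ card (insert s S)) m)
      = gmult (gscale t (gen s)) (gscale (t ^ card S) (gmonom S))"
    using insert
    by (simp add: gmult_scale_left gmult_scale_right prod) (simp add: gscale_def mult_ac)
  moreover have "gmult (\<phi> (gen s)) (\<phi> (gmonom S))
      - gmult (gscale t (gen s)) (gscale (t ^ card S) (gmonom S)) \<in> grass_filt (1 + card S + d)"
    using gen insert.IH gmonom_in_grass_filt[of "{s}"]
    by (intro grass_filt_gmult_congr grass_filt_scale gmonom_in_grass_filt)
      (simp_all add: gen_eq_gmonom fun_diff_def)
  ultimately have "gscale \<sigma> (\<phi> m - gscale (t ^ card (insert s S)) m)
      \<in> grass_filt (card (insert s S) + d)"
    using insert.hyps by (simp add: gscale_diff)
  then show ?case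
    unfolding m_def using grass_filt_scale_iff[OF gsign_nonzero] \<sigma>_def by blast
qed

lemma phi_congr_grade_scale:
  assumes gen: "\<And>j. \<phi> (gen j) - gscale t (gen j) \<in> grass_filt (1 + d)"
    and v: "v \<in> grassE" "v \<in> grass_filt k" and "1 \<le> k"
  shows "\<phi> v - grade_scale t v \<in> grass_filt (k + d)"
proof -
  define A where "A = {S. v S \<noteq> 0}"
  have A: "finite A" "\<And>S. S \<in> A \<Longrightarrow> finite S \<and> k \<le> card S"
    using v unfolding A_def grassE_def grass_filt_def by auto
  have "\<phi> v = (\<Sum>S\<in>A. gscale (v S) (\<phi> (gmonom S)))"
    unfolding A_def by (subst grass_expansion[OF v(1)], rule phi_lincomb)
      (use A in \<open>auto simp: A_def gmonom_in_grassE\<close>)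
  moreover have "grade_scale t v = (\<Sum>S\<in>A. gscale (v S) (gscale (t ^ card S) (gmonom S)))"
  proof
    fix T
    show "grade_scale t v T = (\<Sum>S\<in>A. gscale (v S) (gscale (t ^ card S) (gmonom S))) T"
      using A(1) by (simp add: A_def grade_scale_def sum_fun_apply gscale_def gmonom_def
          if_distrib sum.delta' cong: if_cong)
  qed
  ultimately have "\<phi> v - grade_scale t v
      = (\<Sum>S\<in>A. gscale (v S) (\<phi> (gmonom S) - gscale (t ^ card S) (gmonom S)))"
    by (simp add: sum_subtractf gscale_diff)
  also have "\<dots> \<in> grass_filt (k + d)"
  proof (intro grass_filt_sum grass_filt_scale)
    fix S
    assume "S \<in> A"
    with A(2) have "finite S" "k \<le> card S"
      by auto
    with \<open>1 \<le> k\<close> have "S \<noteq> {}" "k + d \<le> card S + d"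
      by auto
    then show "\<phi> (gmonom S) - gscale (t ^ card S) (gmonom S) \<in> grass_filt (k + d)"
      using phi_gmonom_congr[OF gen \<open>finite S\<close> \<open>S \<noteq> {}\<close>] grass_filt_antimono by blast
  qed
  finally show ?thesis .
qed

lemma phi_grass_filt:
  assumes "v \<in> grassE" "v \<in> grass_filt k" "1 \<le> k"
  shows "\<phi> v \<in> grass_filt k"
proof -
  have "\<phi> (gen j) - gscale 0 (gen j) \<in> grass_filt (1 + 0)" for j
    using phi_gen_in_filt1 by simp
  moreover have "grade_scale 0 v = 0"
    using assms(2,3) grass_filt_antimono[of 1 k] by (intro grade_scale_zero) auto
  ultimately show ?thesis
    using phi_congr_grade_scale[OF _ assms] by fastforce
qed

lemma lin_part_eq_deg1_part:
  assumes "z \<in> grassL"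
  shows "lin_part \<phi> z = deg1_part (\<phi> z)"
proof -
  have "\<phi> z = (\<Sum>i\<in>{i. z {i} \<noteq> 0}. gscale (z {i}) (\<phi> (gen i)))"
    by (subst grassL_expansion(2)[OF assms])
      (rule phi_lincomb[OF grassL_expansion(1)[OF assms] gen_in_grassE])
  then show ?thesis
    unfolding lin_part_def deg1_part_def by (auto simp: sum_fun_apply gscale_def)
qed

end

locale grass_involution = grass_aut \<phi> for \<phi> :: "'a::field_char_0 grass \<Rightarrow> 'a grass" +
  assumes involutive: "x \<in> grassE \<Longrightarrow> \<phi> (\<phi> x) = x"
begin

lemma lin_part_in_grassL: "x \<in> grassL \<Longrightarrow> lin_part \<phi> x \<in> grassL"
  by (simp add: lin_part_eq_deg1_part deg1_part_in_grassL phi_in_grassE grassL_grassE)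

lemma lin_part_diff:
  "x \<in> grassL \<Longrightarrow> y \<in> grassL \<Longrightarrow> lin_part \<phi> (x - y) = lin_part \<phi> x - lin_part \<phi> y"
  by (simp add: lin_part_eq_deg1_part grassL_diff phi_diff deg1_part_diff grassL_grassE)

lemma lin_part_involutive:
  assumes x: "x \<in> grassL"
  shows "lin_part \<phi> (lin_part \<phi> x) = x"
proof -
  define y where "y = \<phi> x"
  define h where "h = y - deg1_part y"
  have xE: "x \<in> grassE" and x1: "x \<in> grass_filt 1"
    using x by (rule grassL_grassE, rule grassL_filt1)
  have yE: "y \<in> grassE" and y1: "deg1_part y \<in> grassL"
    unfolding y_def using phi_in_grassE[OF xE] deg1_part_in_grassL by auto
  have hE: "h \<in> grassE"
    unfolding h_def by (rule grassE_diff[OF yE grassL_grassE[OF y1]])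
  have "h \<in> grass_filt 2"
    unfolding h_def y_def using phi_grass_filt[OF xE x1] by (auto intro: diff_deg1_part_in_filt2)
  then have "deg1_part (\<phi> h) = 0"
    using phi_grass_filt[OF hE] by (auto intro: deg1_part_filt2)
  have "x = \<phi> (deg1_part y) + \<phi> h"
    using involutive[OF xE] phi_add[OF grassL_grassE[OF y1] hE]
    unfolding y_def h_def by simp
  then have "deg1_part x = lin_part \<phi> (deg1_part y)"
    using \<open>deg1_part (\<phi> h) = 0\<close> y1 by (simp add: deg1_part_add lin_part_eq_deg1_part)
  then show ?thesis
    using x by (simp add: deg1_part_grassL lin_part_eq_deg1_part y_def)
qed

lemma lin_part_eq_id_if_no_neg_eigenvector:
  assumes no_neg: "\<forall>x\<in>grassL. x \<noteq> 0 \<longrightarrow> lin_part \<phi> x \<noteq> - x"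
    and x: "x \<in> grassL"
  shows "lin_part \<phi> x = x"
proof -
  define z where "z = x - lin_part \<phi> x"
  have z: "z \<in> grassL"
    unfolding z_def using x by (intro grassL_diff lin_part_in_grassL)
  have "lin_part \<phi> z = - z"
    unfolding z_def using x by (simp add: lin_part_diff lin_part_in_grassL lin_part_involutive)
  with no_neg z have "z = 0"
    by blast
  then show ?thesis
    unfolding z_def by simp
qed

lemma phi_congr_if_lin_part_id:
  assumes id: "\<forall>x\<in>grassL. lin_part \<phi> x = x"
    and "v \<in> grassE" "v \<in> grass_filt k" "1 \<le> k"
  shows "\<phi> v - v \<in> grass_filt (k + 1)"
proof -
  have gen: "\<phi> (gen j) - gscale 1 (gen j) \<in> grass_filt (1 + 1)" for j
  proof -
    have "deg1_part (\<phi> (gen j)) = gen j"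
      using id gen_in_grassL lin_part_eq_deg1_part by metis
    moreover have "\<phi> (gen j) - deg1_part (\<phi> (gen j)) \<in> grass_filt 2"
      by (rule diff_deg1_part_in_filt2[OF phi_gen_in_filt1])
    ultimately show ?thesis
      unfolding one_add_one by simp
  qed
  show ?thesis
    using phi_congr_grade_scale[OF gen assms(2-4)] by simp
qed

lemma phi_gen_eq_if_lin_part_id:
  assumes id: "\<forall>x\<in>grassL. lin_part \<phi> x = x"
  shows "\<phi> (gen i) = gen i"
proof -
  define h where "h = \<phi> (gen i) - gen i"
  have hE: "h \<in> grassE"
    unfolding h_def by (intro grassE_diff phi_in_grassE gen_in_grassE)
  have "\<phi> h = - h"
    unfolding h_def by (simp add: phi_diff phi_in_grassE gen_in_grassE involutive)
  then have anti: "\<phi> h - h = gscale (-2) h"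
    by (auto simp: gscale_def)
  have "h \<in> grass_filt (Suc n)" for n
  proof (induction n)
    case 0
    have "h \<in> grass_filt 1"
      unfolding h_def by (intro grass_filt_diff phi_gen_in_filt1 grassL_filt1 gen_in_grassL)
    then show ?case
      by simp
  next
    case (Suc n)
    have "gscale (-2) h \<in> grass_filt (Suc n + 1)"
      using phi_congr_if_lin_part_id[OF id hE Suc] anti by simp
    then show ?case
      by (simp add: grass_filt_scale_iff)
  qed
  then have "h \<in> grass_filt k" for k
    using grass_filt_antimono[of k "Suc k"] by auto
  then have "h = 0"
    by (rule grass_filt_Inter)
  then show ?thesis
    unfolding h_def by simp
qed

end

theorem mainTheorem15:
  fixes \<phi> :: "'a::field_char_0 grass \<Rightarrow> 'a grass"
  assumes "is_grass_aut \<phi>"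
    and "\<forall>x\<in>grassE. \<phi> (\<phi> x) = x"
    and "type4 \<phi>"
  shows "\<exists>x\<in>grassL. x \<noteq> 0 \<and> lin_part \<phi> x = - x"
proof (rule ccontr)
  interpret grass_involution \<phi>
    using assms(1,2) by unfold_locales auto
  assume "\<not> ?thesis"
  then have "\<forall>x\<in>grassL. lin_part \<phi> x = x"
    using lin_part_eq_id_if_no_neg_eigenvector by blast
  then have "\<phi> (gen 0) = gen 0"
    by (rule phi_gen_eq_if_lin_part_id)
  then show False
    using type4_no_fixed_vector[OF assms(3) gen_in_grassL gen_nonzero] by blast
qed

end
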